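(* Let $n\ge 1$ and let $B\in\mathbb{R}^{n\times n}$ satisfy $B_{ij}\ge 0$ and $\sum_{j=1}^n B_{ij}\le 1$ for all $i,j$. Let $b\in\mathbb{R}^n$ be given by $b_i=1-\sum_{j=1}^n B_{ij}$, let $\zeta=\frac{1}{n^2}\sum_{i,j}\mathbb{1}(B_{ij}>0)$, let $R=\sum_{k=1}^\infty \operatorname{tr}\!\left(\frac{B^{2k}}{\zeta^k n^k}\right)$, let $r$ be the rank of $B^2$, and let $\mu_i=\frac{1}{n}\sum_{k=1}^n B_{ik}$ be the mean of the $i$-th row of $B$. Assume $\zeta n>\rho(B^2)$. Then $$R\le \frac{\sqrt{r}\left(\sum_{i=1}^n\sum_{j=1}^n (B_{ij}-\mu_i)^2+\sum_{i=1}^n(1-b_i)^2\right)}{\sigma_n(\zeta n I-B^2)}.$$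
   Context: $B$ is the sub-transition matrix of a Markov generation model over $n$ words, whose full transition matrix on $n+1$ states (the last an absorbing end-of-sentence state) is $\begin{bmatrix}B & b\\ 0&1\end{bmatrix}$. $\mathbb{1}(\cdot)$ is the indicator function, $\rho(\cdot)$ the spectral radius, $\sigma_n(\cdot)$ the smallest singular value, $I$ the $n\times n$ identity matrix. *)

theory Defs
  imports "HOL-Analysis.Analysis"
begin

primrec matpow :: "real^'n^'n \<Rightarrow> nat \<Rightarrow> real^'n^'n" where
  "matpow A 0 = mat 1"
| "matpow A (Suc k) = A ** matpow A k"

definition complex_eigenvalues :: "real^'n^'n \<Rightarrow> complex set" where
  "complex_eigenvalues A =
     {l. \<exists>v::complex^'n. v \<noteq> 0 \<and>
          (\<chi> i j. complex_of_real (A $ i $ j)) *v v = l *s v}"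

definition spectral_radius :: "real^'n^'n \<Rightarrow> real" where
  "spectral_radius A = Sup (cmod ` complex_eigenvalues A)"

definition smallest_singular_value :: "real^'n^'n \<Rightarrow> real" where
  "smallest_singular_value M =
     sqrt (Inf {l::real. \<exists>v::real^'n. v \<noteq> 0 \<and> (transpose M ** M) *v v = l *\<^sub>R v})"

end

theory Submission
  imports Defs "Jordan_Normal_Form.Spectral_Radius"
begin

(*
  Put P = B^2, s = zeta n and M = s I - P. As rho(P) < s, the powers of P/s tend to zero
  (Jordan normal form), so the Neumann series sum_{k >= 1} (P/s)^k converges to M^-1 P and
  R = tr (M^-1 P). A minimiser w of |M w| on the unit sphere is an eigenvector of M^T M, so
  sigma_n(M) = |M w|, whence sigma_n(M) |M^-1 u| <= |u|. The columns of P M^-1 lie in the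
  range of P; expanding the trace in an orthonormal basis U of that range gives
    tr (M^-1 P) = sum_{u in U} <P^T u, M^-1 u> <= sum_{u in U} |P^T u| / sigma_n(M)
                <= sqrt (rank P) |P|_F / sigma_n(M)
  by Cauchy-Schwarz and Parseval; the Frobenius norm |P|_F is just norm P on real^'n^'n.
  Finally |B^2|_F <= |B|_F^2, and |B|_F^2 is the sum of the squared deviations from the
  row means plus sum_i (row sum i)^2 / n <= sum_i (1 - b_i)^2.
*)

no_notation Matrix.vec_index (infixl \<open>$\<close> 100)
no_notation Matrix.scalar_prod (infix \<open>\<bullet>\<close> 70)
hide_const (open) Matrix.mat Matrix.vec Matrix.orthogonal VectorSpace.subspace
  Spectral_Radius.spectral_radius

lemma matpow_Suc_right: "matpow A (Suc k) = matpow A k ** A"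
  by (induction k) (simp_all add: matrix_mul_assoc)

lemma matpow_scaleR: "matpow (c *\<^sub>R A) k = c ^ k *\<^sub>R matpow A k"
  by (induction k) (simp_all add: scalar_matrix_assoc[symmetric] matrix_scalar_ac)

lemma matpow_mult_self: "matpow (A ** A) k = matpow A (2 * k)"
  by (induction k) (simp_all add: matrix_mul_assoc)

lemma trace_scaleR: "trace (c *\<^sub>R A) = c * trace (A :: real^'n^'n)"
  by (simp add: trace_def sum_distrib_left)

lemma trace_sum: "trace (\<Sum>k<K. A k) = (\<Sum>k<K. trace (A k :: real^'n^'n))" for K :: nat
  by (induction K) (simp_all add: trace_add trace_def)

lemma matrix_diff_ldistrib: "A ** (B - C) = A ** B - A ** C"
  for A :: "'a::ring_1^'n^'m" and B C :: "'a^'p^'n"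
  by (simp add: matrix_matrix_mult_def Finite_Cartesian_Product.vec_eq_iff sum_subtractf
      right_diff_distrib)

lemma matrix_diff_rdistrib: "(A - B) ** C = A ** C - B ** C"
  for A B :: "'a::ring_1^'n^'m" and C :: "'a^'p^'n"
  by (simp add: matrix_matrix_mult_def Finite_Cartesian_Product.vec_eq_iff sum_subtractf
      left_diff_distrib)

(* Cartesian matrices are transferred to those of Jordan_Normal_Form, whose spectral radius
   theory we use, along a fixed enumeration of the index type. *)

definition index_enum :: "nat \<Rightarrow> 'n::finite" where
  "index_enum = (SOME f. bij_betw f {0..<CARD('n)} UNIV)"

definition index_pos :: "'n::finite \<Rightarrow> nat" where
  "index_pos = inv_into {0..<CARD('n)} index_enum"

lemma bij_betw_index_enum: "bij_betw (index_enum :: nat \<Rightarrow> 'n::finite) {0..<CARD('n)} UNIV"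
proof -
  have "\<exists>f :: nat \<Rightarrow> 'n. bij_betw f {0..<CARD('n)} UNIV"
    using ex_bij_betw_nat_finite[of "UNIV :: 'n set"] by simp
  then show ?thesis
    unfolding index_enum_def by (rule someI_ex)
qed

lemma index_enum_pos [simp]: "index_enum (index_pos m) = m"
  unfolding index_pos_def using bij_betw_index_enum by (meson UNIV_I bij_betw_inv_into_right)

lemma index_pos_enum [simp]:
  assumes "i < CARD('n)"
  shows "index_pos (index_enum i :: 'n::finite) = i"
  unfolding index_pos_def
  by (rule bij_betw_inv_into_left[OF bij_betw_index_enum]) (use assms in simp)

lemma index_pos_less [simp]: "index_pos (m :: 'n::finite) < CARD('n)"
  unfolding index_pos_def using bij_betw_index_enum
  by (metis UNIV_I atLeastLessThan_iff bij_betw_def inv_into_into)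

lemma index_enum_inject:
  "i < CARD('n) \<Longrightarrow> j < CARD('n) \<Longrightarrow> (index_enum i :: 'n::finite) = index_enum j \<longleftrightarrow> i = j"
  by (metis index_pos_enum)

lemma sum_index_enum: "(\<Sum>k<CARD('n). g (index_enum k :: 'n::finite)) = (\<Sum>m\<in>UNIV. g m)"
  using sum.reindex_bij_betw[OF bij_betw_index_enum, of g] by (simp add: atLeast0LessThan)

definition vec_of :: "'a^'n \<Rightarrow> 'a Matrix.vec" where
  "vec_of x = Matrix.vec CARD('n) (\<lambda>i. x $ index_enum i)"

definition complex_mat_of :: "real^'n^'n \<Rightarrow> complex Matrix.mat" where
  "complex_mat_of A = Matrix.mat CARD('n) CARD('n)
     (\<lambda>(i, j). complex_of_real (A $ index_enum i $ index_enum j))"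

lemma complex_mat_of_carrier [simp]:
  "complex_mat_of (A :: real^'n^'n) \<in> carrier_mat CARD('n) CARD('n)"
  by (simp add: complex_mat_of_def)

lemma dim_complex_mat_of [simp]:
  "dim_row (complex_mat_of (A :: real^'n^'n)) = CARD('n)"
  "dim_col (complex_mat_of (A :: real^'n^'n)) = CARD('n)"
  by (simp_all add: complex_mat_of_def)

lemma vec_of_carrier [simp]: "vec_of (x :: 'a^'n) \<in> carrier_vec CARD('n)"
  by (simp add: vec_of_def)

lemma vec_of_inject: "vec_of x = vec_of y \<longleftrightarrow> x = y"
proof
  assume eq: "vec_of x = vec_of y"
  show "x = y"
  proof (rule Finite_Cartesian_Product.vec_eq_iff[THEN iffD2, rule_format])
    fix m
    have "x $ m = vec_index (vec_of x) (index_pos m)"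
      by (simp add: vec_of_def)
    also have "\<dots> = y $ m"
      unfolding eq by (simp add: vec_of_def)
    finally show "x $ m = y $ m" .
  qed
qed simp

lemma vec_of_0: "vec_of (0 :: 'a::zero^'n) = 0\<^sub>v CARD('n)"
  by (rule eq_vecI) (simp_all add: vec_of_def)

lemma vec_of_smult: "vec_of (l *s x) = l \<cdot>\<^sub>v vec_of x"
  by (rule eq_vecI) (simp_all add: vec_of_def)

lemma vec_of_surj:
  "v \<in> carrier_vec CARD('n) \<Longrightarrow> v = vec_of (\<chi> m :: 'n::finite. vec_index v (index_pos m))"
  by (rule eq_vecI) (auto simp: vec_of_def)

lemma complex_mat_of_mult_vec:
  fixes A :: "real^'n^'n"
  shows "complex_mat_of A *\<^sub>v vec_of x = vec_of ((\<chi> i j. complex_of_real (A $ i $ j)) *v x)"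
proof (rule eq_vecI)
  fix i
  assume "i < dim_vec (vec_of ((\<chi> i j. complex_of_real (A $ i $ j)) *v x))"
  then have i: "i < CARD('n)"
    by (simp add: vec_of_def)
  have "vec_index (complex_mat_of A *\<^sub>v vec_of x) i
      = (\<Sum>k<CARD('n). complex_of_real (A $ index_enum i $ index_enum k) * x $ index_enum k)"
    using i by (simp add: complex_mat_of_def vec_of_def scalar_prod_def atLeast0LessThan row_def)
  also have "\<dots> = (\<Sum>m\<in>UNIV. complex_of_real (A $ index_enum i $ m) * x $ m)"
    by (rule sum_index_enum)
  also have "\<dots> = vec_index (vec_of ((\<chi> i j. complex_of_real (A $ i $ j)) *v x)) i"
    using i by (simp add: vec_of_def matrix_vector_mult_def)
  finally show "vec_index (complex_mat_of A *\<^sub>v vec_of x) i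
      = vec_index (vec_of ((\<chi> i j. complex_of_real (A $ i $ j)) *v x)) i" .
qed (simp add: complex_mat_of_def vec_of_def)

lemma complex_mat_of_mult:
  fixes A C :: "real^'n^'n"
  shows "complex_mat_of (A ** C) = complex_mat_of A * complex_mat_of C"
proof (rule eq_matI)
  fix i j
  assume "i < dim_row (complex_mat_of A * complex_mat_of C)"
    and "j < dim_col (complex_mat_of A * complex_mat_of C)"
  then have i: "i < CARD('n)" and j: "j < CARD('n)"
    by (simp_all add: complex_mat_of_def)
  have "(complex_mat_of A * complex_mat_of C) $$ (i, j) = (\<Sum>k<CARD('n).
      complex_of_real (A $ index_enum i $ index_enum k) *
      complex_of_real (C $ index_enum k $ index_enum j))"
    using i j by (simp add: complex_mat_of_def scalar_prod_def atLeast0LessThan)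
  also have "\<dots> = (\<Sum>m\<in>UNIV.
      complex_of_real (A $ index_enum i $ m) * complex_of_real (C $ m $ index_enum j))"
    by (rule sum_index_enum)
  also have "\<dots> = complex_mat_of (A ** C) $$ (i, j)"
    using i j by (simp add: complex_mat_of_def matrix_matrix_mult_def)
  finally show "complex_mat_of (A ** C) $$ (i, j) = (complex_mat_of A * complex_mat_of C) $$ (i, j)"
    by simp
qed (simp_all add: complex_mat_of_def)

lemma complex_mat_of_one: "complex_mat_of (mat 1 :: real^'n^'n) = 1\<^sub>m CARD('n)"
  by (rule eq_matI)
    (auto simp: complex_mat_of_def Finite_Cartesian_Product.mat_def index_enum_inject)

lemma complex_mat_of_matpow: "complex_mat_of (matpow A k) = complex_mat_of A ^\<^sub>m k"
proof (induction k)
  case 0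
  then show ?case
    by (simp add: complex_mat_of_one)
next
  case (Suc k)
  then show ?case
    by (simp del: matpow.simps add: matpow_Suc_right complex_mat_of_mult)
qed

lemma complex_eigenvalues_eq_spectrum:
  fixes A :: "real^'n^'n"
  shows "complex_eigenvalues A = spectrum (complex_mat_of A)"
proof -
  have eigenvector_iff: "eigenvector (complex_mat_of A) (vec_of x) l \<longleftrightarrow>
      x \<noteq> 0 \<and> (\<chi> i j. complex_of_real (A $ i $ j)) *v x = l *s x" for x l
    by (simp add: eigenvector_def complex_mat_of_mult_vec vec_of_smult[symmetric]
        vec_of_0[symmetric] vec_of_inject)
  have "l \<in> complex_eigenvalues A \<longleftrightarrow> l \<in> spectrum (complex_mat_of A)" for l
  proof
    assume "l \<in> complex_eigenvalues A"
    then show "l \<in> spectrum (complex_mat_of A)"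
      unfolding complex_eigenvalues_def spectrum_def eigenvalue_def eigenvector_iff[symmetric]
      by blast
  next
    assume "l \<in> spectrum (complex_mat_of A)"
    then obtain v where v: "eigenvector (complex_mat_of A) v l"
      unfolding spectrum_def eigenvalue_def by blast
    then have "v \<in> carrier_vec CARD('n)"
      by (simp add: eigenvector_def)
    then have "v = vec_of (\<chi> m :: 'n. vec_index v (index_pos m))"
      by (rule vec_of_surj)
    with v show "l \<in> complex_eigenvalues A"
      unfolding complex_eigenvalues_def
      by (metis (mono_tags, lifting) eigenvector_iff mem_Collect_eq)
  qed
  then show ?thesis
    by blast
qed

lemma spectral_radius_complex_mat_of:
  fixes A :: "real^'n^'n"
  shows "spectral_radius A = Spectral_Radius.spectral_radius (complex_mat_of A)"
  using spectral_radius_mem_max[OF complex_mat_of_carrier[of A] zero_less_card_finite]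
  unfolding Defs.spectral_radius_def complex_eigenvalues_eq_spectrum
  by (intro cSup_eq_maximum) auto

lemma cmod_le_spectral_radius:
  fixes A :: "real^'n^'n"
  shows "l \<in> complex_eigenvalues A \<Longrightarrow> cmod l \<le> spectral_radius A"
  using spectral_radius_mem_max(2)[OF complex_mat_of_carrier[of A] zero_less_card_finite]
  unfolding spectral_radius_complex_mat_of complex_eigenvalues_eq_spectrum by blast

lemma spectral_radius_attained:
  fixes A :: "real^'n^'n"
  shows "\<exists>l \<in> complex_eigenvalues A. cmod l = spectral_radius A"
  using spectral_radius_mem_max(1)[OF complex_mat_of_carrier[of A] zero_less_card_finite]
  unfolding spectral_radius_complex_mat_of complex_eigenvalues_eq_spectrum by force

lemma spectral_radius_nonneg: "0 \<le> spectral_radius A"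
  using spectral_radius_attained[of A] by (metis norm_ge_zero)

lemma bounded_matpow_if_spectral_radius_less_1:
  fixes P :: "real^'n^'n"
  assumes "spectral_radius P < 1"
  shows "\<exists>c. \<forall>k i j. \<bar>matpow P k $ i $ j\<bar> \<le> c"
proof -
  obtain c where c: "\<And>k. norm_bound (complex_mat_of P ^\<^sub>m k) c"
    using spectral_radius_jnf_norm_bound_less_1_upper_triangular[OF complex_mat_of_carrier] assms
    unfolding spectral_radius_complex_mat_of by blast
  show ?thesis
  proof (intro exI allI)
    fix k and i j :: 'n
    have "norm_bound (complex_mat_of (matpow P k)) c"
      using c[of k] unfolding complex_mat_of_matpow .
    then have "norm (complex_mat_of (matpow P k) $$ (index_pos i, index_pos j)) \<le> c"
      unfolding norm_bound_def by simp
    then show "\<bar>matpow P k $ i $ j\<bar> \<le> c"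
      by (simp add: complex_mat_of_def)
  qed
qed

lemma complex_eigenvalues_scaleR:
  fixes P :: "real^'n^'n"
  assumes c: "c \<noteq> 0" and l: "l \<in> complex_eigenvalues (c *\<^sub>R P)"
  shows "l / complex_of_real c \<in> complex_eigenvalues P"
proof -
  from l obtain v :: "complex^'n" where v0: "v \<noteq> 0"
    and ev: "(\<chi> i j. complex_of_real ((c *\<^sub>R P) $ i $ j)) *v v = l *s v"
    unfolding complex_eigenvalues_def by auto
  have "(\<chi> i j. complex_of_real (P $ i $ j)) *v v = (l / complex_of_real c) *s v"
  proof (rule Finite_Cartesian_Product.vec_eq_iff[THEN iffD2, rule_format])
    fix i
    have "complex_of_real c * (\<Sum>j\<in>UNIV. complex_of_real (P $ i $ j) * v $ j) = l * v $ i"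
      using arg_cong[OF ev, of "\<lambda>x. x $ i"]
      by (simp add: matrix_vector_mult_def sum_distrib_left mult.assoc)
    then show "((\<chi> i j. complex_of_real (P $ i $ j)) *v v) $ i = ((l / complex_of_real c) *s v) $ i"
      using c by (simp add: matrix_vector_mult_def field_simps)
  qed
  with v0 show ?thesis
    unfolding complex_eigenvalues_def by blast
qed

lemma real_eigenvalue_in_complex_eigenvalues:
  fixes P :: "real^'n^'n"
  assumes v: "v \<noteq> 0" and Pv: "P *v v = s *\<^sub>R v"
  shows "complex_of_real s \<in> complex_eigenvalues P"
proof -
  define w :: "complex^'n" where "w = (\<chi> i. complex_of_real (v $ i))"
  have "w \<noteq> 0"
    using v unfolding w_def by (simp add: Finite_Cartesian_Product.vec_eq_iff)
  moreover have "(\<chi> i j. complex_of_real (P $ i $ j)) *v w = complex_of_real s *s w"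
  proof (rule Finite_Cartesian_Product.vec_eq_iff[THEN iffD2, rule_format])
    fix i
    have "complex_of_real ((P *v v) $ i) = complex_of_real s * w $ i"
      using Pv unfolding w_def by simp
    then show "((\<chi> i j. complex_of_real (P $ i $ j)) *v w) $ i = (complex_of_real s *s w) $ i"
      by (simp add: matrix_vector_mult_def w_def)
  qed
  ultimately show ?thesis
    unfolding complex_eigenvalues_def by blast
qed

lemma scaleR_mat_minus_kernel_trivial:
  fixes P :: "real^'n^'n"
  assumes \<rho>: "spectral_radius P < s" and v: "(s *\<^sub>R mat 1 - P) *v v = 0"
  shows "v = 0"
proof (rule ccontr)
  assume "v \<noteq> 0"
  moreover have "P *v v = s *\<^sub>R v"
    using v by (simp add: matrix_vector_mult_diff_rdistrib matrix_scaleR_vector_ac[symmetric]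
        matrix_vector_mul_lid)
  ultimately have "cmod (complex_of_real s) \<le> spectral_radius P"
    by (intro cmod_le_spectral_radius real_eigenvalue_in_complex_eigenvalues)
  with \<rho> show False
    by simp
qed

lemma matpow_scaled_tendsto_zero:
  fixes P :: "real^'n^'n"
  assumes \<rho>: "spectral_radius P < s"
  shows "(\<lambda>k. matpow ((1/s) *\<^sub>R P) k $ i $ j) \<longlonglongrightarrow> 0"
proof -
  define q where "q = (spectral_radius P + s) / 2"
  have q: "0 < q" "q < s" "spectral_radius P < q"
    using \<rho> spectral_radius_nonneg[of P] unfolding q_def by auto
  have "spectral_radius ((1/q) *\<^sub>R P) < 1"
  proof -
    obtain l where l: "l \<in> complex_eigenvalues ((1/q) *\<^sub>R P)"
      and l_eq: "cmod l = spectral_radius ((1/q) *\<^sub>R P)"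
      using spectral_radius_attained by blast
    have "l * complex_of_real q \<in> complex_eigenvalues P"
      using complex_eigenvalues_scaleR[OF _ l] q by simp
    then have "cmod l * q \<le> spectral_radius P"
      using cmod_le_spectral_radius q by (fastforce simp: norm_mult)
    with q have "cmod l < 1"
      by (smt (verit, best) mult_le_cancel_right1)
    with l_eq show ?thesis
      by simp
  qed
  then have "\<exists>c. \<forall>k i j. \<bar>matpow ((1/q) *\<^sub>R P) k $ i $ j\<bar> \<le> c"
    by (rule bounded_matpow_if_spectral_radius_less_1)
  then obtain c where c: "\<And>k i j. \<bar>matpow ((1/q) *\<^sub>R P) k $ i $ j\<bar> \<le> c"
    by blast
  have scaled: "matpow ((1/s) *\<^sub>R P) k = (q/s) ^ k *\<^sub>R matpow ((1/q) *\<^sub>R P) k" for k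
  proof -
    have "(1/s) *\<^sub>R P = (q/s) *\<^sub>R ((1/q) *\<^sub>R P)"
      using q by simp
    then show ?thesis
      by (simp only: matpow_scaleR)
  qed
  have geometric: "(\<lambda>k. (q/s) ^ k * c) \<longlonglongrightarrow> 0"
    using q by (intro tendsto_mult_left_zero LIMSEQ_power_zero) auto
  have bound: "norm (matpow ((1/s) *\<^sub>R P) k $ i $ j) \<le> (q/s) ^ k * c" for k
  proof -
    have "norm (matpow ((1/s) *\<^sub>R P) k $ i $ j) = (q/s) ^ k * \<bar>matpow ((1/q) *\<^sub>R P) k $ i $ j\<bar>"
      using q by (simp add: scaled abs_mult)
    also have "\<dots> \<le> (q/s) ^ k * c"
      using q c by (intro mult_left_mono) auto
    finally show ?thesis .
  qed
  have "\<forall>\<^sub>F k in sequentially. norm (matpow ((1/s) *\<^sub>R P) k $ i $ j) \<le> (q/s) ^ k * c"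
    by (intro always_eventually allI bound)
  then show ?thesis
    using geometric by (rule Lim_null_comparison)
qed

lemma quadratic_nonneg_imp_linear_coeff_zero:
  fixes a b :: real
  assumes nonneg: "\<And>t. 0 \<le> 2 * t * a + t\<^sup>2 * b"
  shows "a = 0"
proof (rule ccontr)
  assume "a \<noteq> 0"
  then have a2: "0 < a\<^sup>2"
    by simp
  show False
  proof (cases "0 < b")
    case True
    have "0 \<le> 2 * (- a / b) * a + (- a / b)\<^sup>2 * b"
      by (rule nonneg)
    also have "\<dots> = - (a\<^sup>2 / b)"
      using True by (simp add: power2_eq_square field_simps)
    finally have "a\<^sup>2 / b \<le> 0"
      by simp
    moreover have "0 < a\<^sup>2 / b"
      using a2 True by simp
    ultimately show False
      by simp
  next
    case False
    have "0 \<le> 2 * (- a) * a + (- a)\<^sup>2 * b"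
      by (rule nonneg)
    also have "\<dots> = a\<^sup>2 * b - 2 * a\<^sup>2"
      by (simp add: power2_eq_square algebra_simps)
    finally show False
      using a2 False by (smt (verit) mult_pos_neg zero_less_power2 mult_nonneg_nonpos)
  qed
qed

lemma norm_matrix_vector_attains_min:
  fixes M :: "real^'n^'m"
  obtains w where "norm w = 1" "\<And>x. norm (M *v w) * norm x \<le> norm (M *v x)"
proof -
  have cont: "continuous_on (sphere 0 1) (\<lambda>w. norm (M *v w))"
    by (intro continuous_intros linear_continuous_on matrix_vector_mul_bounded_linear)
  have "sphere (0 :: real^'n) 1 \<noteq> {}"
    using norm_axis_1[of undefined] by (metis mem_sphere_0 empty_iff)
  from continuous_attains_inf[OF compact_sphere this cont]
  obtain w where w: "norm w = 1" "\<And>y. norm y = 1 \<Longrightarrow> norm (M *v w) \<le> norm (M *v y)"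
    by auto
  have "norm (M *v w) * norm x \<le> norm (M *v x)" for x
  proof (cases "x = 0")
    case False
    then have "norm (M *v w) \<le> norm (M *v ((1 / norm x) *\<^sub>R x))"
      by (intro w(2)) simp
    also have "\<dots> = norm (M *v x) / norm x"
      by (simp add: matrix_vector_mult_scaleR)
    finally show ?thesis
      using False by (simp add: field_simps)
  qed simp
  with w(1) show ?thesis
    by (rule that)
qed

lemma norm_minimizer_eigenvector:
  fixes M :: "real^'n^'m"
  assumes w: "norm w = 1" and min: "\<And>x. norm (M *v w) * norm x \<le> norm (M *v x)"
  shows "(transpose M ** M) *v w = (norm (M *v w))\<^sup>2 *\<^sub>R w"
proof -
  define \<mu> where "\<mu> = (norm (M *v w))\<^sup>2"
  have low: "\<mu> * (norm x)\<^sup>2 \<le> (norm (M *v x))\<^sup>2" for x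
    unfolding \<mu>_def power_mult_distrib[symmetric] by (intro power_mono min) simp
  have ww: "w \<bullet> w = 1"
    using w by (simp add: norm_eq_1)
  have stationary: "(M *v w) \<bullet> (M *v y) - \<mu> * (w \<bullet> y) = 0" for y
  proof (rule quadratic_nonneg_imp_linear_coeff_zero)
    fix t :: real
    have "(norm (w + t *\<^sub>R y))\<^sup>2 = 1 + 2 * t * (w \<bullet> y) + t\<^sup>2 * (y \<bullet> y)"
      unfolding power2_norm_eq_inner
      by (simp add: inner_add_left inner_add_right ww inner_commute power2_eq_square algebra_simps)
    moreover have "(norm (M *v (w + t *\<^sub>R y)))\<^sup>2
        = \<mu> + 2 * t * ((M *v w) \<bullet> (M *v y)) + t\<^sup>2 * ((M *v y) \<bullet> (M *v y))"
      unfolding \<mu>_def power2_norm_eq_inner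
      by (simp add: matrix_vector_right_distrib matrix_vector_mult_scaleR
          inner_add_left inner_add_right inner_commute power2_eq_square algebra_simps)
    ultimately show "0 \<le> 2 * t * ((M *v w) \<bullet> (M *v y) - \<mu> * (w \<bullet> y))
        + t\<^sup>2 * ((M *v y) \<bullet> (M *v y) - \<mu> * (y \<bullet> y))"
      using low[of "w + t *\<^sub>R y"] by (simp add: algebra_simps)
  qed
  have adjoint: "(M *v w) \<bullet> (M *v y) = ((transpose M ** M) *v w) \<bullet> y" for y
    by (metis dot_lmul_matrix matrix_vector_mul_assoc transpose_matrix_vector)
  define d where "d = (transpose M ** M) *v w - \<mu> *\<^sub>R w"
  have "d \<bullet> d = 0"
    using stationary[of d] adjoint[of d] unfolding d_def by (simp add: inner_diff_left)
  then show ?thesis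
    unfolding d_def \<mu>_def by simp
qed

lemma smallest_singular_value_eq_min_norm:
  fixes M :: "real^'n^'n"
  assumes w: "norm w = 1" and min: "\<And>x. norm (M *v w) * norm x \<le> norm (M *v x)"
  shows "smallest_singular_value M = norm (M *v w)"
proof -
  define E where "E = {l. \<exists>v :: real^'n. v \<noteq> 0 \<and> (transpose M ** M) *v v = l *\<^sub>R v}"
  have "(norm (M *v w))\<^sup>2 \<in> E"
    unfolding E_def using norm_minimizer_eigenvector[OF w min] w
    by (intro CollectI exI[of _ w]) auto
  moreover have "(norm (M *v w))\<^sup>2 \<le> l" if "l \<in> E" for l
  proof -
    from that obtain v where v: "v \<noteq> 0" "(transpose M ** M) *v v = l *\<^sub>R v"
      unfolding E_def by auto
    have "(norm (M *v w) * norm v)\<^sup>2 \<le> (norm (M *v v))\<^sup>2"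
      by (intro power_mono min) simp
    also have "(norm (M *v v))\<^sup>2 = v \<bullet> ((transpose M ** M) *v v)"
      by (metis dot_lmul_matrix matrix_vector_mul_assoc power2_norm_eq_inner
          transpose_matrix_vector inner_commute)
    also have "\<dots> = l * (norm v)\<^sup>2"
      using v by (simp add: power2_norm_eq_inner)
    finally show ?thesis
      using v by (simp add: power_mult_distrib)
  qed
  ultimately have "Inf E = (norm (M *v w))\<^sup>2"
    by (rule cInf_eq_minimum)
  then show ?thesis
    unfolding smallest_singular_value_def E_def by simp
qed

lemma smallest_singular_value_mult_norm_le:
  fixes M :: "real^'n^'n"
  shows "smallest_singular_value M * norm x \<le> norm (M *v x)"
proof -
  obtain w where "norm w = 1" and min: "\<And>x. norm (M *v w) * norm x \<le> norm (M *v x)"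
    using norm_matrix_vector_attains_min[of M] by blast
  with smallest_singular_value_eq_min_norm show ?thesis
    by metis
qed

lemma smallest_singular_value_pos:
  fixes M :: "real^'n^'n"
  assumes ker: "\<And>v. M *v v = 0 \<Longrightarrow> v = 0"
  shows "0 < smallest_singular_value M"
proof -
  obtain w where w: "norm w = 1" "\<And>x. norm (M *v w) * norm x \<le> norm (M *v x)"
    using norm_matrix_vector_attains_min[of M] by blast
  have "M *v w \<noteq> 0"
    using ker w(1) by force
  then show ?thesis
    using smallest_singular_value_eq_min_norm[OF w] by simp
qed

lemma norm_vec_power2: "(norm x)\<^sup>2 = (\<Sum>i\<in>UNIV. (norm (x $ i))\<^sup>2)"
  for x :: "'a::real_normed_vector^'n"
  by (simp add: norm_vec_def L2_set_def sum_nonneg)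

lemma norm_matrix_power2: "(norm A)\<^sup>2 = (\<Sum>i\<in>UNIV. \<Sum>j\<in>UNIV. (A $ i $ j)\<^sup>2)"
  for A :: "real^'n^'m"
  by (simp add: norm_vec_power2)

lemma norm_matrix_mult_le: "norm (A ** B) \<le> norm A * norm B"
  for A :: "real^'n^'m" and B :: "real^'p^'n"
proof -
  have "(norm (A ** B))\<^sup>2
      \<le> (\<Sum>i\<in>UNIV. \<Sum>j\<in>UNIV. (\<Sum>k\<in>UNIV. (A $ i $ k)\<^sup>2) * (\<Sum>k\<in>UNIV. (B $ k $ j)\<^sup>2))"
    unfolding norm_matrix_power2
    by (intro sum_mono) (simp add: matrix_matrix_mult_def Cauchy_Schwarz_ineq_sum)
  also have "\<dots> = (\<Sum>i\<in>UNIV. \<Sum>k\<in>UNIV. (A $ i $ k)\<^sup>2) * (\<Sum>j\<in>UNIV. \<Sum>k\<in>UNIV. (B $ k $ j)\<^sup>2)"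
    by (rule sum_product[symmetric])
  also have "(\<Sum>j\<in>UNIV. \<Sum>k\<in>UNIV. (B $ k $ j)\<^sup>2) = (norm B)\<^sup>2"
    unfolding norm_matrix_power2 by (rule sum.swap)
  finally have "(norm (A ** B))\<^sup>2 \<le> (norm A * norm B)\<^sup>2"
    by (simp add: power_mult_distrib norm_matrix_power2)
  then show ?thesis
    by (rule power2_le_imp_le) simp
qed

lemma orthonormal_basis_sum_inner_power2:
  fixes U :: "'a::euclidean_space set"
  assumes orth: "pairwise orthogonal U" and unit: "\<And>u. u \<in> U \<Longrightarrow> norm u = 1"
    and x: "x \<in> span U"
  shows "(\<Sum>u\<in>U. (x \<bullet> u)\<^sup>2) = (norm x)\<^sup>2"
proof -
  have "finite U"
    using orth pairwise_orthogonal_imp_finite by blast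
  then have "(norm x)\<^sup>2 = x \<bullet> (\<Sum>u\<in>U. (x \<bullet> u) *\<^sub>R u)"
    using orthonormal_basis_expand[OF orth unit x] by (simp add: power2_norm_eq_inner)
  also have "\<dots> = (\<Sum>u\<in>U. (x \<bullet> u)\<^sup>2)"
    by (simp add: inner_sum_right power2_eq_square)
  finally show ?thesis
    by simp
qed

lemma trace_eq_sum_orthonormal_basis:
  fixes Y :: "real^'n^'n"
  assumes orth: "pairwise orthogonal U" and unit: "\<And>u. u \<in> U \<Longrightarrow> norm u = 1"
    and cols: "\<And>i. column i Y \<in> span U"
  shows "trace Y = (\<Sum>u\<in>U. u \<bullet> (Y *v u))"
proof -
  have fin: "finite U"
    using orth pairwise_orthogonal_imp_finite by blast
  have "trace Y = (\<Sum>i\<in>UNIV. column i Y $ i)"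
    by (simp add: trace_def column_def)
  also have "\<dots> = (\<Sum>i\<in>UNIV. \<Sum>u\<in>U. (column i Y \<bullet> u) * u $ i)"
  proof (rule sum.cong[OF refl])
    fix i
    have "column i Y $ i = (\<Sum>u\<in>U. (column i Y \<bullet> u) *\<^sub>R u) $ i"
      using orthonormal_basis_expand[OF orth unit cols fin] by simp
    then show "column i Y $ i = (\<Sum>u\<in>U. (column i Y \<bullet> u) * u $ i)"
      by (simp add: sum_component)
  qed
  also have "\<dots> = (\<Sum>u\<in>U. \<Sum>i\<in>UNIV. (column i Y \<bullet> u) * u $ i)"
    by (rule sum.swap)
  also have "\<dots> = (\<Sum>u\<in>U. u \<bullet> (Y *v u))"
  proof (rule sum.cong[OF refl])
    fix u :: "real^'n"
    have "(\<Sum>i\<in>UNIV. (column i Y \<bullet> u) * u $ i) = (\<Sum>i\<in>UNIV. \<Sum>k\<in>UNIV. u $ k * Y $ k $ i * u $ i)"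
      by (simp add: inner_vec_def column_def sum_distrib_left sum_distrib_right mult_ac)
    also have "\<dots> = (\<Sum>k\<in>UNIV. \<Sum>i\<in>UNIV. u $ k * Y $ k $ i * u $ i)"
      by (rule sum.swap)
    also have "\<dots> = u \<bullet> (Y *v u)"
      by (simp add: inner_vec_def matrix_vector_mult_def sum_distrib_left mult.assoc)
    finally show "(\<Sum>i\<in>UNIV. (column i Y \<bullet> u) * u $ i) = u \<bullet> (Y *v u)" .
  qed
  finally show ?thesis .
qed

lemma sum_norm_transpose_orthonormal_basis:
  fixes P :: "real^'n^'n"
  assumes orth: "pairwise orthogonal U" and unit: "\<And>u. u \<in> U \<Longrightarrow> norm u = 1"
    and cols: "\<And>j. column j P \<in> span U"
  shows "(\<Sum>u\<in>U. (norm (transpose P *v u))\<^sup>2) = (norm P)\<^sup>2"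
proof -
  have "(\<Sum>u\<in>U. (norm (transpose P *v u))\<^sup>2) = (\<Sum>u\<in>U. \<Sum>j\<in>UNIV. (column j P \<bullet> u)\<^sup>2)"
    by (simp add: norm_vec_power2 inner_vec_def matrix_vector_mult_def transpose_def column_def)
  also have "\<dots> = (\<Sum>j\<in>UNIV. \<Sum>u\<in>U. (column j P \<bullet> u)\<^sup>2)"
    by (rule sum.swap)
  also have "\<dots> = (\<Sum>j\<in>UNIV. (norm (column j P))\<^sup>2)"
    using orthonormal_basis_sum_inner_power2[OF orth unit cols] by simp
  also have "\<dots> = (\<Sum>j\<in>UNIV. \<Sum>i\<in>UNIV. (P $ i $ j)\<^sup>2)"
    by (simp add: norm_vec_power2 column_def)
  also have "\<dots> = (norm P)\<^sup>2"
    unfolding norm_matrix_power2 by (rule sum.swap)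
  finally show ?thesis .
qed

lemma trace_mult_le_rank:
  fixes P N :: "real^'n^'n" and \<sigma> :: real
  assumes \<sigma>: "0 < \<sigma>" and N: "\<And>u. \<sigma> * norm (N *v u) \<le> norm u"
  shows "trace (N ** P) \<le> sqrt (real (rank P)) * norm P / \<sigma>"
proof -
  define S where "S = range (\<lambda>x. P *v x)"
  have "subspace S"
    unfolding S_def by (intro linear_subspace_image subspace_UNIV matrix_vector_mul_linear)
  then obtain U where orth: "pairwise orthogonal U" and unit: "\<And>u. u \<in> U \<Longrightarrow> norm u = 1"
    and card: "card U = dim S" and span: "span U = S"
    by (rule orthonormal_basis_subspace) blast+
  have cols: "column j (P ** X) \<in> span U" for j and X :: "real^'n^'n"
    unfolding span S_def matrix_vector_mult_basis[symmetric]
    by (simp add: matrix_vector_mul_assoc[symmetric])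
  have term_le: "u \<bullet> ((P ** N) *v u) \<le> norm (transpose P *v u) / \<sigma>" if "u \<in> U" for u
  proof -
    have "u \<bullet> ((P ** N) *v u) = (transpose P *v u) \<bullet> (N *v u)"
      unfolding transpose_matrix_vector dot_lmul_matrix by (simp add: matrix_vector_mul_assoc)
    also have "\<dots> \<le> norm (transpose P *v u) * norm (N *v u)"
      by (rule norm_cauchy_schwarz)
    also have "\<dots> \<le> norm (transpose P *v u) * (1 / \<sigma>)"
      using N[of u] unit[OF that] \<sigma>
      by (intro mult_left_mono) (simp_all add: field_simps mult.commute)
    finally show ?thesis
      by simp
  qed
  have "trace (N ** P) = (\<Sum>u\<in>U. u \<bullet> ((P ** N) *v u))"
    unfolding trace_mul_sym[of N] by (intro trace_eq_sum_orthonormal_basis orth unit cols)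
  also have "\<dots> \<le> (\<Sum>u\<in>U. norm (transpose P *v u)) / \<sigma>"
    unfolding sum_divide_distrib by (intro sum_mono term_le)
  also have "(\<Sum>u\<in>U. norm (transpose P *v u)) \<le> sqrt (real (card U)) * norm P"
  proof -
    have "(\<Sum>u\<in>U. norm (transpose P *v u))\<^sup>2 \<le> (\<Sum>u\<in>U. (norm (transpose P *v u))\<^sup>2) * card U"
      by (rule sum_squared_le_sum_of_squares)
    also have "\<dots> = (sqrt (real (card U)) * norm P)\<^sup>2"
      using sum_norm_transpose_orthonormal_basis
        [OF orth unit cols[of _ "mat 1", unfolded matrix_mul_rid]]
      by (simp add: power_mult_distrib)
    finally show ?thesis
      by (rule power2_le_imp_le) simp
  qed
  also have "card U = rank P"
    unfolding card S_def rank_dim_range ..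
  finally show ?thesis
    using \<sigma> by (simp add: divide_right_mono)
qed

lemma trace_neumann_series:
  fixes P N :: "real^'n^'n"
  assumes N: "N ** (s *\<^sub>R mat 1 - P) = mat 1" and s: "s \<noteq> 0"
    and lim: "\<And>i j. (\<lambda>k. matpow ((1/s) *\<^sub>R P) k $ i $ j) \<longlonglongrightarrow> 0"
  shows "(\<lambda>k. trace (matpow ((1/s) *\<^sub>R P) (Suc k))) sums trace (N ** P)"
proof -
  define C where "C = (1/s) *\<^sub>R P"
  have P: "P = s *\<^sub>R C"
    unfolding C_def using s by simp
  have telescope: "(s *\<^sub>R mat 1 - P) ** (\<Sum>k<K. matpow C (Suc k)) = P - s *\<^sub>R matpow C (Suc K)"
    for K
  proof (induction K)
    case 0
    then show ?case
      using P by simp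
  next
    case (Suc K)
    have "(s *\<^sub>R mat 1 - P) ** matpow C (Suc K)
        = s *\<^sub>R matpow C (Suc K) - s *\<^sub>R matpow C (Suc (Suc K))"
      unfolding P by (simp add: matrix_diff_rdistrib scalar_matrix_assoc[symmetric] matrix_mul_lid)
    then show ?case
      using Suc.IH by (simp add: matrix_add_ldistrib)
  qed
  have partial_sum: "(\<Sum>k<K. trace (matpow C (Suc k)))
      = trace (N ** P) - s * trace (N ** matpow C (Suc K))" for K
  proof -
    have "(\<Sum>k<K. matpow C (Suc k)) = N ** ((s *\<^sub>R mat 1 - P) ** (\<Sum>k<K. matpow C (Suc k)))"
      by (simp add: matrix_mul_assoc N matrix_mul_lid)
    also have "\<dots> = N ** P - s *\<^sub>R (N ** matpow C (Suc K))"
      unfolding telescope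
      by (simp only: matrix_diff_ldistrib matrix_scalar_ac scalar_matrix_assoc[symmetric])
    finally show ?thesis
      by (simp add: trace_sum[symmetric] trace_sub trace_scaleR)
  qed
  have "(\<lambda>k. matpow C k $ i $ j) \<longlonglongrightarrow> 0" for i j
    unfolding C_def by (rule lim)
  then have "(\<lambda>K. trace (N ** matpow C (Suc K))) \<longlonglongrightarrow> 0"
    unfolding trace_def matrix_matrix_mult_def
    by (simp del: matpow.simps, intro tendsto_null_sum tendsto_mult_right_zero LIMSEQ_Suc)
  then show ?thesis
    unfolding C_def[symmetric] sums_def partial_sum
    using tendsto_diff[OF tendsto_const tendsto_mult_right_zero] by fastforce
qed

lemma sum_power2_deviation_mean:
  fixes x :: "'a \<Rightarrow> real"
  assumes "finite A"
  shows "(\<Sum>j\<in>A. (x j - sum x A / card A)\<^sup>2) = (\<Sum>j\<in>A. (x j)\<^sup>2) - (sum x A)\<^sup>2 / card A"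
proof (cases "A = {}")
  case False
  define c where "c = sum x A / card A"
  have N: "0 < real (card A)"
    using assms False by (simp add: card_gt_0_iff)
  have "(\<Sum>j\<in>A. (x j - c)\<^sup>2) = (\<Sum>j\<in>A. (x j)\<^sup>2 - 2 * c * x j + c\<^sup>2)"
    by (simp add: power2_diff algebra_simps)
  also have "\<dots> = (\<Sum>j\<in>A. (x j)\<^sup>2) - 2 * c * sum x A + card A * c\<^sup>2"
    by (simp add: sum.distrib sum_subtractf sum_distrib_left)
  also have "\<dots> = (\<Sum>j\<in>A. (x j)\<^sup>2) - (sum x A)\<^sup>2 / card A"
    unfolding c_def using N by (simp add: field_simps power2_eq_square)
  finally show ?thesis
    unfolding c_def .
qed simp

lemma sum_power2_le_deviation_mean:
  fixes x :: "'a \<Rightarrow> real"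
  assumes "finite A"
  shows "(\<Sum>j\<in>A. (x j)\<^sup>2) \<le> (\<Sum>j\<in>A. (x j - sum x A / card A)\<^sup>2) + (sum x A)\<^sup>2"
proof -
  have "(sum x A)\<^sup>2 / card A \<le> (sum x A)\<^sup>2"
    by (cases "card A = 0") (simp_all add: divide_left_mono[of 1, simplified])
  then show ?thesis
    unfolding sum_power2_deviation_mean[OF assms] by simp
qed

lemma norm_matrix_power2_le_row_deviation:
  fixes B :: "real^'n^'m"
  shows "(norm B)\<^sup>2 \<le> (\<Sum>i\<in>UNIV. \<Sum>j\<in>UNIV. (B $ i $ j - (\<Sum>k\<in>UNIV. B $ i $ k) / CARD('n))\<^sup>2)
    + (\<Sum>i\<in>UNIV. (\<Sum>j\<in>UNIV. B $ i $ j)\<^sup>2)"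
  unfolding norm_matrix_power2 sum.distrib[symmetric]
  by (intro sum_mono sum_power2_le_deviation_mean) simp

theorem corollary1:
  fixes B :: "real^'n^'n" and b :: "real^'n" and \<zeta> R :: real and r :: nat
    and \<mu> :: "'n \<Rightarrow> real"
  defines "n \<equiv> CARD('n)"
  assumes nonneg: "\<And>i j. B $ i $ j \<ge> 0"
    and rowsum: "\<And>i. (\<Sum>j\<in>UNIV. B $ i $ j) \<le> 1"
    and b_def: "\<And>i. b $ i = 1 - (\<Sum>j\<in>UNIV. B $ i $ j)"
    and zeta_def: "\<zeta> = real (card {(i, j). B $ i $ j > 0}) / real n ^ 2"
    and R_def: "R = (\<Sum>k. trace (matpow B (2 * Suc k)) / (\<zeta> ^ Suc k * real n ^ Suc k))"
    and r_def: "r = rank (B ** B)"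
    and mu_def: "\<And>i. \<mu> i = (\<Sum>k\<in>UNIV. B $ i $ k) / real n"
    and spec: "\<zeta> * real n > spectral_radius (B ** B)"
  shows "R \<le> sqrt (real r) *
           ((\<Sum>i\<in>UNIV. \<Sum>j\<in>UNIV. (B $ i $ j - \<mu> i) ^ 2) + (\<Sum>i\<in>UNIV. (1 - b $ i) ^ 2))
           / smallest_singular_value ((\<zeta> * real n) *\<^sub>R mat 1 - B ** B)"
proof -
  define P where "P = B ** B"
  define s where "s = \<zeta> * real n"
  define M where "M = s *\<^sub>R mat 1 - P"
  define \<sigma> where "\<sigma> = smallest_singular_value M"
  have \<rho>: "spectral_radius P < s"
    using spec unfolding P_def s_def .
  have ker: "v = 0" if "M *v v = 0" for v
    using scaleR_mat_minus_kernel_trivial[OF \<rho>] that unfolding M_def .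
  then have "invertible M"
    using matrix_left_invertible_ker[of M] invertible_left_inverse by blast
  then obtain N where N: "N ** M = mat 1" "M ** N = mat 1"
    unfolding invertible_def by blast
  have "0 < \<sigma>"
    unfolding \<sigma>_def using ker by (rule smallest_singular_value_pos)
  have \<sigma>N: "\<sigma> * norm (N *v u) \<le> norm u" for u
    using smallest_singular_value_mult_norm_le[of M "N *v u"] N(2)
    unfolding \<sigma>_def by (simp add: matrix_vector_mul_assoc matrix_vector_mul_lid)
  have series_term: "trace (matpow B (2 * Suc k)) / (\<zeta> ^ Suc k * real n ^ Suc k)
      = trace (matpow ((1/s) *\<^sub>R P) (Suc k))" for k
    unfolding matpow_scaleR trace_scaleR P_def matpow_mult_self s_def
    by (simp add: power_one_over power_mult_distrib)
  have "(\<lambda>k. trace (matpow ((1/s) *\<^sub>R P) (Suc k))) sums trace (N ** P)"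
    using \<rho> spectral_radius_nonneg[of P] N(1)
    by (intro trace_neumann_series matpow_scaled_tendsto_zero) (auto simp: M_def)
  then have R_eq: "R = trace (N ** P)"
    unfolding R_def series_term by (rule sums_unique[symmetric])
  have "norm P \<le> (\<Sum>i\<in>UNIV. \<Sum>j\<in>UNIV. (B $ i $ j - \<mu> i)\<^sup>2) + (\<Sum>i\<in>UNIV. (1 - b $ i)\<^sup>2)"
    (is "_ \<le> ?Q")
  proof -
    have "norm P \<le> (norm B)\<^sup>2"
      unfolding P_def power2_eq_square by (rule norm_matrix_mult_le)
    also have "\<dots> \<le> ?Q"
      using norm_matrix_power2_le_row_deviation[of B] by (simp add: mu_def b_def n_def)
    finally show ?thesis .
  qed
  have "R \<le> sqrt (real (rank P)) * norm P / \<sigma>"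
    unfolding R_eq by (rule trace_mult_le_rank[OF \<open>0 < \<sigma>\<close> \<sigma>N])
  also have "\<dots> \<le> sqrt (real (rank P)) * ?Q / \<sigma>"
    using \<open>norm P \<le> ?Q\<close> \<open>0 < \<sigma>\<close> by (intro divide_right_mono mult_left_mono) auto
  finally show ?thesis
    unfolding P_def r_def \<sigma>_def M_def s_def .
qed

end
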